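(* Let $k\ge 2$, let $H_0$ be a finite $k$-uniform hypergraph, let $(H_t)_{t\ge0}$ be the ILTH hypergraphs generated from $H_0$, and for each $t$ let $G(H_t)$ denote the 2-section of $H_t$. A finite graph $G$ admits a homomorphism to $G(H_0)$ if and only if $G$ is isomorphic to an induced subgraph of $G(H_t)$ for some integer $t\ge 0$. In particular, the set of isomorphism types of finite induced subgraphs of the graphs $G(H_t)$, $t\ge0$, is exactly the set of finite graphs admitting a homomorphism to $G(H_0)$.
   Context: A $k$-uniform hypergraph has every hyperedge a $k$-element subset of the vertex set. The ILTH process: given $H_t$, form $H_{t+1}$ by adding for each vertex $x\in V(H_t)$ a new vertex $x'$ (its clone), and taking $E(H_{t+1})=E(H_t)\cup\{(e\setminus\{x\})\cup\{x'\} : e\in E(H_t),\ x\in e\}$. The 2-section of a hypergraph is the graph on the same vertices in which distinct vertices are adjacent iff they lie in a common hyperedge. A homomorphism of graphs is a map on vertices sending edges to edges. *)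

theory Defs
  imports Main
begin

definition uniform_hypergraph :: "nat \<Rightarrow> 'v set \<Rightarrow> 'v set set \<Rightarrow> bool" where
  "uniform_hypergraph k V E \<longleftrightarrow> (\<forall>e\<in>E. e \<subseteq> V \<and> finite e \<and> card e = k)"

text \<open>Vertices of the ILTH hypergraphs are pairs (a, p) with a an original vertex of H_0
  and p a list recording the clone steps; the clone of (a,p) created at step t is (a, p @ [t]).
  At step t all vertices have list entries < t, so clones are fresh.\<close>

definition clone :: "nat \<Rightarrow> 'a \<times> nat list \<Rightarrow> 'a \<times> nat list" where
  "clone t x = (fst x, snd x @ [t])"

definition ilth_step :: "nat \<Rightarrow> ('a \<times> nat list) set \<times> ('a \<times> nat list) set set
    \<Rightarrow> ('a \<times> nat list) set \<times> ('a \<times> nat list) set set" where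
  "ilth_step t H = (fst H \<union> clone t ` fst H,
     snd H \<union> {insert (clone t x) (e - {x}) | e x. e \<in> snd H \<and> x \<in> e})"

fun ilth :: "'a set \<Rightarrow> 'a set set \<Rightarrow> nat \<Rightarrow> ('a \<times> nat list) set \<times> ('a \<times> nat list) set set" where
  "ilth V0 E0 0 = ((\<lambda>a. (a, [])) ` V0, (\<lambda>e. (\<lambda>a. (a, [])) ` e) ` E0)"
| "ilth V0 E0 (Suc t) = ilth_step t (ilth V0 E0 t)"

definition graph :: "'v set \<Rightarrow> 'v set set \<Rightarrow> bool" where
  "graph V E \<longleftrightarrow> (\<forall>e\<in>E. \<exists>u v. e = {u, v} \<and> u \<noteq> v \<and> u \<in> V \<and> v \<in> V)"

definition two_section :: "'v set \<Rightarrow> 'v set set \<Rightarrow> 'v set set" where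
  "two_section V E = {{u, v} | u v. u \<noteq> v \<and> (\<exists>e\<in>E. u \<in> e \<and> v \<in> e)}"

definition graph_hom :: "'a set \<Rightarrow> 'a set set \<Rightarrow> 'b set \<Rightarrow> 'b set set \<Rightarrow> ('a \<Rightarrow> 'b) \<Rightarrow> bool" where
  "graph_hom V E W F f \<longleftrightarrow> f ` V \<subseteq> W \<and> (\<forall>u\<in>V. \<forall>v\<in>V. {u, v} \<in> E \<longrightarrow> {f u, f v} \<in> F)"

definition iso_induced_subgraph :: "'a set \<Rightarrow> 'a set set \<Rightarrow> 'b set \<Rightarrow> 'b set set \<Rightarrow> bool" where
  "iso_induced_subgraph V E W F \<longleftrightarrow>
     (\<exists>f S. S \<subseteq> W \<and> bij_betw f V S \<and>
        (\<forall>u\<in>V. \<forall>v\<in>V. {u, v} \<in> E \<longleftrightarrow> {f u, f v} \<in> F))"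

end

(*
  A vertex of H_t is a pair (a, p) of a vertex a of H_0 and a strictly increasing list p of
  clone steps below t, and the hyperedges of H_t are exactly the hyperedges of H_0 with pairwise
  disjoint such lists attached to their vertices. Hence two vertices are adjacent in G(H_t) iff
  their originals are adjacent in G(H_0) and their lists are disjoint, so projecting to the
  original vertex is a homomorphism G(H_t) -> G(H_0). Conversely, every finite graph is the
  disjointness graph of finite sets of numbers: number the non-adjacent pairs {u, v}, singletons
  included, and label v by the numbers of the pairs containing it. Given a homomorphism f into
  G(H_0), the map v |-> (f v, labels of v) embeds the graph as an induced subgraph of G(H_t).
*)

theory Submission
  imports Defs
begin

definition clone_history :: "nat \<Rightarrow> nat list \<Rightarrow> bool" where
  "clone_history t p \<longleftrightarrow> sorted_wrt (<) p \<and> (\<forall>i\<in>set p. i < t)"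

lemma clone_history_Suc:
  "clone_history (Suc t) p \<longleftrightarrow> clone_history t p \<or> (\<exists>q. p = q @ [t] \<and> clone_history t q)"
proof
  assume p: "clone_history (Suc t) p"
  show "clone_history t p \<or> (\<exists>q. p = q @ [t] \<and> clone_history t q)"
  proof (cases p rule: rev_cases)
    case (snoc q i)
    with p show ?thesis
      by (cases "i = t") (auto simp: clone_history_def sorted_wrt_append less_Suc_eq)
  qed (simp add: clone_history_def)
qed (auto simp: clone_history_def sorted_wrt_append less_SucI)

lemma mem_fst_ilth_iff:
  "(a, p) \<in> fst (ilth V0 E0 t) \<longleftrightarrow> a \<in> V0 \<and> clone_history t p"
proof (induction t arbitrary: p)
  case 0
  then show ?case by (auto simp: clone_history_def)
next
  case (Suc t)
  have "(a, p) \<in> fst (ilth V0 E0 (Suc t)) \<longleftrightarrow>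
      (a, p) \<in> fst (ilth V0 E0 t) \<or> (\<exists>q. p = q @ [t] \<and> (a, q) \<in> fst (ilth V0 E0 t))"
    by (force simp: ilth_step_def clone_def)
  then show ?case
    using Suc.IH by (auto simp: clone_history_Suc)
qed

definition disjoint_clone_histories :: "nat \<Rightarrow> 'a set \<Rightarrow> ('a \<Rightarrow> nat list) \<Rightarrow> bool" where
  "disjoint_clone_histories t e0 P \<longleftrightarrow>
     (\<forall>a\<in>e0. clone_history t (P a)) \<and> pairwise (\<lambda>a b. disjnt (set (P a)) (set (P b))) e0"

lemma disjoint_clone_histories_Suc:
  "disjoint_clone_histories t e0 P \<Longrightarrow> disjoint_clone_histories (Suc t) e0 P"
  by (simp add: disjoint_clone_histories_def clone_history_Suc)

lemma disjoint_clone_histories_snoc: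
  assumes "disjoint_clone_histories t e0 P"
  shows "disjoint_clone_histories (Suc t) e0 (P(a := P a @ [t]))"
  using assms unfolding disjoint_clone_histories_def clone_history_def pairwise_def disjnt_def
  by (auto simp: sorted_wrt_append less_SucI) blast+

lemma disjoint_clone_histories_butlast:
  assumes "disjoint_clone_histories (Suc t) e0 P" "a \<in> e0" "P a = q @ [t]"
  shows "disjoint_clone_histories t e0 (P(a := q))"
proof -
  have "clone_history t (P b)" if "b \<in> e0" "b \<noteq> a" for b
  proof -
    have "disjnt (set (P b)) (set (P a))"
      using assms(1,2) that unfolding disjoint_clone_histories_def pairwise_def by blast
    then have "t \<notin> set (P b)" using assms(3) by (auto simp: disjnt_def)
    then show ?thesis
      using assms(1) that(1) by (auto simp: disjoint_clone_histories_def clone_history_Suc)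
  qed
  moreover have "clone_history t q"
    using assms by (auto simp: disjoint_clone_histories_def clone_history_def sorted_wrt_append)
  moreover have "set ((P(a := q)) b) \<subseteq> set (P b)" for b
    using assms(3) by auto
  then have "pairwise (\<lambda>b c. disjnt (set ((P(a := q)) b)) (set ((P(a := q)) c))) e0"
    using assms(1) unfolding disjoint_clone_histories_def pairwise_def
    by (meson disjnt_subset1 disjnt_subset2)
  ultimately show ?thesis by (auto simp: disjoint_clone_histories_def)
qed

lemma insert_clone_image_Pair:
  assumes "a \<in> e0"
  shows "insert (clone t (a, P a)) ((\<lambda>b. (b, P b)) ` e0 - {(a, P a)}) =
    (\<lambda>b. (b, (P(a := P a @ [t])) b)) ` e0"
proof -
  let ?P' = "P(a := P a @ [t])"
  have "(\<lambda>b. (b, P b)) ` e0 - {(a, P a)} = (\<lambda>b. (b, ?P' b)) ` (e0 - {a})" by auto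
  moreover have "clone t (a, P a) = (a, ?P' a)" by (simp add: clone_def)
  ultimately have "insert (clone t (a, P a)) ((\<lambda>b. (b, P b)) ` e0 - {(a, P a)}) =
      (\<lambda>b. (b, ?P' b)) ` insert a (e0 - {a})"
    by (simp only: image_insert)
  then show ?thesis using assms by (simp only: insert_Diff)
qed

lemma snd_ilth_Suc:
  "snd (ilth V0 E0 (Suc t)) =
    snd (ilth V0 E0 t) \<union> {insert (clone t x) (e - {x}) | e x. e \<in> snd (ilth V0 E0 t) \<and> x \<in> e}"
  by (simp add: ilth_step_def)

lemma mem_snd_ilthD:
  "e \<in> snd (ilth V0 E0 t) \<Longrightarrow>
    \<exists>e0\<in>E0. \<exists>P. disjoint_clone_histories t e0 P \<and> e = (\<lambda>a. (a, P a)) ` e0"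
proof (induction t arbitrary: e)
  case 0
  then obtain e0 where e0: "e0 \<in> E0" "e = (\<lambda>a. (a, [])) ` e0" by auto
  have "disjoint_clone_histories 0 e0 (\<lambda>_. [])"
    by (simp add: disjoint_clone_histories_def clone_history_def pairwise_def)
  then show ?case
    using e0 by (intro bexI[of _ e0] exI[of _ "\<lambda>_. []"]) simp_all
next
  case (Suc t)
  from Suc.prems consider "e \<in> snd (ilth V0 E0 t)"
    | e' x where "e' \<in> snd (ilth V0 E0 t)" "x \<in> e'" "e = insert (clone t x) (e' - {x})"
    unfolding snd_ilth_Suc by blast
  then show ?case
  proof cases
    case 1
    then obtain e0 P where "e0 \<in> E0" "disjoint_clone_histories t e0 P"
      "e = (\<lambda>a. (a, P a)) ` e0" using Suc.IH by blast
    then show ?thesis using disjoint_clone_histories_Suc by blast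
  next
    case 2
    then obtain e0 P where "e0 \<in> E0" and P: "disjoint_clone_histories t e0 P"
      and e': "e' = (\<lambda>a. (a, P a)) ` e0" using Suc.IH by blast
    obtain a where a: "a \<in> e0" "x = (a, P a)" using 2(2) e' by blast
    have "e = (\<lambda>b. (b, (P(a := P a @ [t])) b)) ` e0"
      using insert_clone_image_Pair[OF a(1), of t P] 2(3) e' a(2) by simp
    with \<open>e0 \<in> E0\<close> disjoint_clone_histories_snoc[OF P] show ?thesis by blast
  qed
qed

lemma mem_snd_ilthI:
  "e0 \<in> E0 \<Longrightarrow> disjoint_clone_histories t e0 P \<Longrightarrow>
    (\<lambda>a. (a, P a)) ` e0 \<in> snd (ilth V0 E0 t)"
proof (induction t arbitrary: P)
  case 0
  then have "(\<lambda>a. (a, P a)) ` e0 = (\<lambda>a. (a, [])) ` e0"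
    by (auto simp: disjoint_clone_histories_def clone_history_def)
  then show ?case using 0 by simp
next
  case (Suc t)
  show ?case
  proof (cases "\<forall>a\<in>e0. clone_history t (P a)")
    case True
    then have "disjoint_clone_histories t e0 P"
      using Suc.prems(2) by (simp add: disjoint_clone_histories_def)
    then show ?thesis using Suc.IH Suc.prems(1) unfolding snd_ilth_Suc by blast
  next
    case False
    then obtain a q where a: "a \<in> e0" "P a = q @ [t]"
      using Suc.prems(2) by (auto simp: disjoint_clone_histories_def clone_history_Suc)
    let ?P' = "P(a := q)"
    have "(\<lambda>b. (b, ?P' b)) ` e0 \<in> snd (ilth V0 E0 t)"
      using Suc.IH[OF Suc.prems(1) disjoint_clone_histories_butlast[OF Suc.prems(2) a]] .
    moreover have "(a, ?P' a) \<in> (\<lambda>b. (b, ?P' b)) ` e0" using a(1) by blast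
    ultimately have "insert (clone t (a, ?P' a)) ((\<lambda>b. (b, ?P' b)) ` e0 - {(a, ?P' a)})
        \<in> snd (ilth V0 E0 (Suc t))"
      unfolding snd_ilth_Suc by blast
    moreover have "?P'(a := ?P' a @ [t]) = P" using a(2) by auto
    ultimately show ?thesis using insert_clone_image_Pair[OF a(1), of t ?P'] by (simp only:)
  qed
qed

lemma mem_snd_ilth_iff:
  "e \<in> snd (ilth V0 E0 t) \<longleftrightarrow>
    (\<exists>e0\<in>E0. \<exists>P. disjoint_clone_histories t e0 P \<and> e = (\<lambda>a. (a, P a)) ` e0)"
  using mem_snd_ilthD mem_snd_ilthI by auto

lemma doubleton_mem_two_section_iff:
  "{x, y} \<in> two_section V E \<longleftrightarrow> x \<noteq> y \<and> (\<exists>e\<in>E. x \<in> e \<and> y \<in> e)"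
  unfolding two_section_def by (auto simp: doubleton_eq_iff)

lemma two_section_ilth_iff:
  assumes "x \<in> fst (ilth V0 E0 t)" "y \<in> fst (ilth V0 E0 t)"
  shows "{x, y} \<in> two_section (fst (ilth V0 E0 t)) (snd (ilth V0 E0 t)) \<longleftrightarrow>
    {fst x, fst y} \<in> two_section V0 E0 \<and> disjnt (set (snd x)) (set (snd y))"
proof
  assume "{x, y} \<in> two_section (fst (ilth V0 E0 t)) (snd (ilth V0 E0 t))"
  then obtain e where "x \<noteq> y" "e \<in> snd (ilth V0 E0 t)" "x \<in> e" "y \<in> e"
    by (auto simp: doubleton_mem_two_section_iff)
  then obtain e0 P where e0: "e0 \<in> E0" "disjoint_clone_histories t e0 P"
    and xy: "x \<noteq> y" "x \<in> (\<lambda>a. (a, P a)) ` e0" "y \<in> (\<lambda>a. (a, P a)) ` e0"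
    by (auto simp: mem_snd_ilth_iff)
  then obtain a b where "a \<in> e0" "b \<in> e0" "a \<noteq> b" "x = (a, P a)" "y = (b, P b)" by blast
  with e0 show "{fst x, fst y} \<in> two_section V0 E0 \<and> disjnt (set (snd x)) (set (snd y))"
    by (auto simp: doubleton_mem_two_section_iff disjoint_clone_histories_def pairwise_def)
next
  assume "{fst x, fst y} \<in> two_section V0 E0 \<and> disjnt (set (snd x)) (set (snd y))"
  then obtain e0 where e0: "e0 \<in> E0" "fst x \<in> e0" "fst y \<in> e0"
    and xy: "fst x \<noteq> fst y" "disjnt (set (snd x)) (set (snd y))"
    by (auto simp: doubleton_mem_two_section_iff)
  define Q where "Q c = (if c = fst x then snd x else if c = fst y then snd y else [])" for c
  have "clone_history t (snd x)" "clone_history t (snd y)"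
    using assms mem_fst_ilth_iff[of "fst x" "snd x"] mem_fst_ilth_iff[of "fst y" "snd y"] by simp_all
  moreover have "clone_history t []" by (simp add: clone_history_def)
  ultimately have "\<forall>c\<in>e0. clone_history t (Q c)" by (simp add: Q_def)
  moreover have "pairwise (\<lambda>c d. disjnt (set (Q c)) (set (Q d))) e0"
    using xy unfolding pairwise_def Q_def by (auto simp: disjnt_def)
  ultimately have "disjoint_clone_histories t e0 Q"
    by (simp add: disjoint_clone_histories_def)
  then have "(\<lambda>c. (c, Q c)) ` e0 \<in> snd (ilth V0 E0 t)"
    by (rule mem_snd_ilthI[OF e0(1)])
  moreover have "x \<noteq> y" using xy(1) by auto
  moreover have "x \<in> (\<lambda>c. (c, Q c)) ` e0"
    by (rule image_eqI[OF _ e0(2)]) (simp add: Q_def)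
  moreover have "y \<in> (\<lambda>c. (c, Q c)) ` e0"
    by (rule image_eqI[OF _ e0(3)]) (use xy(1) in \<open>simp add: Q_def\<close>)
  ultimately show "{x, y} \<in> two_section (fst (ilth V0 E0 t)) (snd (ilth V0 E0 t))"
    unfolding doubleton_mem_two_section_iff by (intro conjI bexI)
qed

lemma graph_hom_fst_ilth:
  "graph_hom (fst (ilth V0 E0 t)) (two_section (fst (ilth V0 E0 t)) (snd (ilth V0 E0 t)))
    V0 (two_section V0 E0) fst"
proof -
  have "fst x \<in> V0" if "x \<in> fst (ilth V0 E0 t)" for x
    using that mem_fst_ilth_iff[of "fst x" "snd x"] by simp
  moreover have "{fst x, fst y} \<in> two_section V0 E0"
    if "x \<in> fst (ilth V0 E0 t)" "y \<in> fst (ilth V0 E0 t)"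
      "{x, y} \<in> two_section (fst (ilth V0 E0 t)) (snd (ilth V0 E0 t))" for x y
    using two_section_ilth_iff[OF that(1,2)] that(3) by blast
  ultimately show ?thesis
    unfolding graph_hom_def by blast
qed

lemma graph_hom_if_iso_induced_subgraph:
  assumes "iso_induced_subgraph V E W F" "graph_hom W F X Y h"
  shows "\<exists>f. graph_hom V E X Y f"
proof -
  from assms(1) obtain g S where "S \<subseteq> W" "bij_betw g V S"
    "\<forall>u\<in>V. \<forall>v\<in>V. {u, v} \<in> E \<longleftrightarrow> {g u, g v} \<in> F"
    unfolding iso_induced_subgraph_def by blast
  then have "graph_hom V E W F g"
    unfolding graph_hom_def bij_betw_def by blast
  with assms(2) have "graph_hom V E X Y (h \<circ> g)"
    unfolding graph_hom_def by (auto simp: image_subset_iff)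
  then show ?thesis by blast
qed

lemma graph_singleton_notin:
  "graph V E \<Longrightarrow> {v} \<notin> E"
  unfolding graph_def by (metis doubleton_eq_iff insert_absorb2)

lemma disjnt_image_incident_iff:
  assumes "inj_on f T"
  shows "disjnt (f ` {s \<in> T. u \<in> s}) (f ` {s \<in> T. v \<in> s}) \<longleftrightarrow>
    \<not> (\<exists>s\<in>T. u \<in> s \<and> v \<in> s)"
proof -
  have "f ` {s \<in> T. u \<in> s} \<inter> f ` {s \<in> T. v \<in> s} =
      f ` ({s \<in> T. u \<in> s} \<inter> {s \<in> T. v \<in> s})"
    by (rule inj_on_image_Int[OF assms, symmetric]) auto
  then show ?thesis by (auto simp: disjnt_def)
qed

lemma graph_disjointness_representation:
  fixes V :: "'b set"
  assumes "finite V" "graph V E"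
  obtains P :: "'b \<Rightarrow> nat set" and n where "inj_on P V" "\<And>v. P v \<subseteq> {..<n}"
    "\<And>u v. u \<in> V \<Longrightarrow> v \<in> V \<Longrightarrow> {u, v} \<in> E \<longleftrightarrow> disjnt (P u) (P v)"
proof -
  define T where "T = {{u, v} | u v. u \<in> V \<and> v \<in> V \<and> {u, v} \<notin> E}"
  have "T \<subseteq> Pow V" unfolding T_def by auto
  with assms(1) have "finite T" by (simp add: finite_subset)
  then obtain idx :: "'b set \<Rightarrow> nat" and n where idx: "idx ` T = {..<n}" "inj_on idx T"
    using finite_imp_inj_to_nat_seg[of T] by (auto simp: lessThan_def)
  define P where "P v = idx ` {s \<in> T. v \<in> s}" for v
  have singleton_in_T: "{v} \<in> T" if "v \<in> V" for v
  proof -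
    have "{v, v} \<in> T"
      using that graph_singleton_notin[OF assms(2)] unfolding T_def
      by (intro CollectI exI[of _ v]) simp
    then show ?thesis by simp
  qed
  have "inj_on P V"
  proof (rule inj_onI)
    fix u v assume "u \<in> V" "v \<in> V" "P u = P v"
    then have "{s \<in> T. u \<in> s} = {s \<in> T. v \<in> s}"
      unfolding P_def by (subst (asm) inj_on_image_eq_iff[OF idx(2)]) auto
    moreover have "{u} \<in> {s \<in> T. u \<in> s}" using singleton_in_T[OF \<open>u \<in> V\<close>] by simp
    ultimately have "{u} \<in> {s \<in> T. v \<in> s}" by (simp only:)
    then show "u = v" by simp
  qed
  moreover have "P v \<subseteq> {..<n}" for v
    unfolding P_def idx(1)[symmetric] by (rule image_mono) blast
  moreover have "{u, v} \<in> E \<longleftrightarrow> disjnt (P u) (P v)" if "u \<in> V" "v \<in> V" for u v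
  proof -
    have "(\<exists>s\<in>T. u \<in> s \<and> v \<in> s) \<longleftrightarrow> {u, v} \<notin> E"
    proof
      assume "\<exists>s\<in>T. u \<in> s \<and> v \<in> s"
      then obtain a b where "u \<in> {a, b}" "v \<in> {a, b}" "{a, b} \<notin> E" unfolding T_def by blast
      then show "{u, v} \<notin> E"
        using graph_singleton_notin[OF assms(2)] by (auto simp: insert_commute)
    next
      assume "{u, v} \<notin> E"
      with that have "{u, v} \<in> T" unfolding T_def by blast
      then show "\<exists>s\<in>T. u \<in> s \<and> v \<in> s" by blast
    qed
    then show ?thesis
      unfolding P_def disjnt_image_incident_iff[OF idx(2)] by blast
  qed
  ultimately show ?thesis by (rule that)
qed

lemma iso_induced_subgraph_ilth_if_graph_hom:
  assumes "finite V" "graph V E" "graph_hom V E V0 (two_section V0 E0) f"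
  shows "\<exists>t. iso_induced_subgraph V E (fst (ilth V0 E0 t))
    (two_section (fst (ilth V0 E0 t)) (snd (ilth V0 E0 t)))"
proof -
  obtain P :: "_ \<Rightarrow> nat set" and n where P: "inj_on P V" "\<And>v. P v \<subseteq> {..<n}"
    "\<And>u v. u \<in> V \<Longrightarrow> v \<in> V \<Longrightarrow> {u, v} \<in> E \<longleftrightarrow> disjnt (P u) (P v)"
    using graph_disjointness_representation[OF assms(1,2)] by blast
  define g where "g v = (f v, sorted_list_of_set (P v))" for v
  have set_snd_g: "set (snd (g v)) = P v" for v
    using P(2)[of v] by (simp add: g_def finite_subset)
  have g_mem: "g v \<in> fst (ilth V0 E0 n)" if "v \<in> V" for v
  proof -
    have "f v \<in> V0" using assms(3) that unfolding graph_hom_def by blast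
    moreover have "clone_history n (sorted_list_of_set (P v))"
      using P(2)[of v] set_snd_g[of v] by (auto simp: clone_history_def g_def)
    ultimately show ?thesis by (simp add: g_def mem_fst_ilth_iff)
  qed
  have "inj_on g V"
  proof (rule inj_onI)
    fix u v assume "u \<in> V" "v \<in> V" "g u = g v"
    then have "P u = P v" using set_snd_g by metis
    with P(1) show "u = v" using \<open>u \<in> V\<close> \<open>v \<in> V\<close> by (rule inj_onD)
  qed
  moreover have "{u, v} \<in> E \<longleftrightarrow>
      {g u, g v} \<in> two_section (fst (ilth V0 E0 n)) (snd (ilth V0 E0 n))"
    if "u \<in> V" "v \<in> V" for u v
  proof -
    have "{g u, g v} \<in> two_section (fst (ilth V0 E0 n)) (snd (ilth V0 E0 n)) \<longleftrightarrow>
        {f u, f v} \<in> two_section V0 E0 \<and> disjnt (P u) (P v)"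
      using two_section_ilth_iff[OF g_mem[OF that(1)] g_mem[OF that(2)]]
      by (simp add: set_snd_g) (simp add: g_def)
    moreover have "{u, v} \<in> E \<Longrightarrow> {f u, f v} \<in> two_section V0 E0"
      using assms(3) that unfolding graph_hom_def by blast
    ultimately show ?thesis using P(3)[OF that] by blast
  qed
  ultimately have "iso_induced_subgraph V E (fst (ilth V0 E0 n))
      (two_section (fst (ilth V0 E0 n)) (snd (ilth V0 E0 n)))"
    unfolding iso_induced_subgraph_def bij_betw_def using g_mem by blast
  then show ?thesis by blast
qed

theorem theorem3p1:
  fixes k :: nat and V0 :: "'a set" and E0 :: "'a set set"
    and V :: "'b set" and E :: "'b set set"
  assumes "k \<ge> 2"
    and "finite V0"
    and "uniform_hypergraph k V0 E0"
    and "finite V" and "graph V E"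
  shows "(\<exists>f. graph_hom V E V0 (two_section V0 E0) f) \<longleftrightarrow>
         (\<exists>t. iso_induced_subgraph V E (fst (ilth V0 E0 t))
                 (two_section (fst (ilth V0 E0 t)) (snd (ilth V0 E0 t))))"
proof
  assume "\<exists>f. graph_hom V E V0 (two_section V0 E0) f"
  then obtain f where "graph_hom V E V0 (two_section V0 E0) f" ..
  with assms(4,5) show "\<exists>t. iso_induced_subgraph V E (fst (ilth V0 E0 t))
      (two_section (fst (ilth V0 E0 t)) (snd (ilth V0 E0 t)))"
    by (rule iso_induced_subgraph_ilth_if_graph_hom)
next
  assume "\<exists>t. iso_induced_subgraph V E (fst (ilth V0 E0 t))
      (two_section (fst (ilth V0 E0 t)) (snd (ilth V0 E0 t)))"
  then obtain t where "iso_induced_subgraph V E (fst (ilth V0 E0 t))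
      (two_section (fst (ilth V0 E0 t)) (snd (ilth V0 E0 t)))" ..
  then show "\<exists>f. graph_hom V E V0 (two_section V0 E0) f"
    using graph_hom_fst_ilth by (rule graph_hom_if_iso_induced_subgraph)
qed

end
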